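(* Let $G$ be a finite connected graph (multiple edges allowed, no loops) with vertices $v_1,\dots,v_n$, and let $i\neq j$. The pair $\{v_i,v_j\}$ has order $1$ if and only if there is a path $\mathcal{P}$ in $G$ from $v_i$ to $v_j$ (with pairwise distinct edges) such that for every edge $e$ of $\mathcal{P}$ the graph $G\setminus\{e\}$ is disconnected. Consequently, $G$ is multiply connected if and only if its Laplacian is spread.
   Context: For $i\neq j$ let $c_{ij}$ be the number of edges joining $v_i$ and $v_j$, and let $c_{ii}=-\sum_{j\neq i}c_{ij}$. Let $M(G)=(c_{ij})\in M_n(\mathbb{Z})$; the Laplacian of $G$ is $-M(G)$. Let $e_1,\dots,e_n$ be the standard basis of $\mathbb{Z}^n$ and $E_{ij}=e_i-e_j$. For an integer $h>0$, a pair $\{v_i,v_j\}$ ($i\ne j$) has order $h$ if there is $S=(s_1,\dots,s_n)^t\in\mathbb{Z}^n$ with $M(G)S=hE_{ij}$ and $\gcd(s_1-s_n,\dots,s_{n-1}-s_n)=1$; equivalently, the image of $E_{ij}$ in $\mathbb{Z}^n/\mathrm{Im}(M(G))$ has order exactly $h$. A graph is multiply connected if removing any single edge leaves it connected. A matrix $M\in M_n(\mathbb{Z})$ is spread if the quotient map $\mathbb{Z}^n\to\mathbb{Z}^n/\mathrm{Im}(M)$ (where $\mathrm{Im}(M)$ is the $\mathbb{Z}$-span of the columns) is injective on $\{e_1,\dots,e_n\}$, i.e. no $E_{ij}$ ($i\neq j$) lies in $\mathrm{Im}(M)$. *)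

theory Defs
  imports Main
begin

text \<open>A finite multigraph without loops on vertex set {0..<n} (vertex v_(k+1) is k):
  edges form a finite set E of type 'e, each edge e having endpoints ep e = (a,b).\<close>

definition wf_multigraph :: "nat \<Rightarrow> 'e set \<Rightarrow> ('e \<Rightarrow> nat \<times> nat) \<Rightarrow> bool" where
  "wf_multigraph n E ep \<longleftrightarrow> finite E \<and>
     (\<forall>e\<in>E. fst (ep e) < n \<and> snd (ep e) < n \<and> fst (ep e) \<noteq> snd (ep e))"

definition joins :: "('e \<Rightarrow> nat \<times> nat) \<Rightarrow> 'e \<Rightarrow> nat \<Rightarrow> nat \<Rightarrow> bool" where
  "joins ep e u v \<longleftrightarrow> ep e = (u, v) \<or> ep e = (v, u)"

definition adj_rel :: "'e set \<Rightarrow> ('e \<Rightarrow> nat \<times> nat) \<Rightarrow> (nat \<times> nat) set" where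
  "adj_rel F ep = {(u, v). \<exists>e\<in>F. joins ep e u v}"

definition mg_connected :: "nat \<Rightarrow> 'e set \<Rightarrow> ('e \<Rightarrow> nat \<times> nat) \<Rightarrow> bool" where
  "mg_connected n F ep \<longleftrightarrow> (\<forall>u<n. \<forall>v<n. (u, v) \<in> (adj_rel F ep)\<^sup>*)"

definition multiply_connected :: "nat \<Rightarrow> 'e set \<Rightarrow> ('e \<Rightarrow> nat \<times> nat) \<Rightarrow> bool" where
  "multiply_connected n E ep \<longleftrightarrow> (\<forall>e\<in>E. mg_connected n (E - {e}) ep)"

definition is_path :: "'e set \<Rightarrow> ('e \<Rightarrow> nat \<times> nat) \<Rightarrow> nat \<Rightarrow> nat \<Rightarrow> 'e list \<Rightarrow> nat list \<Rightarrow> bool" where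
  "is_path E ep i j es vs \<longleftrightarrow> set es \<subseteq> E \<and> distinct es \<and>
     length vs = Suc (length es) \<and> vs ! 0 = i \<and> vs ! length es = j \<and>
     (\<forall>k<length es. joins ep (es ! k) (vs ! k) (vs ! Suc k))"

definition Mmat :: "'e set \<Rightarrow> ('e \<Rightarrow> nat \<times> nat) \<Rightarrow> nat \<Rightarrow> nat \<Rightarrow> nat \<Rightarrow> int" where
  "Mmat E ep n i j = (if i = j then - (\<Sum>k\<in>{0..<n} - {i}. int (card {e\<in>E. joins ep e i k}))
                      else int (card {e\<in>E. joins ep e i j}))"

definition matvec :: "nat \<Rightarrow> (nat \<Rightarrow> nat \<Rightarrow> int) \<Rightarrow> (nat \<Rightarrow> int) \<Rightarrow> nat \<Rightarrow> int" where
  "matvec n A x = (\<lambda>i. \<Sum>j<n. A i j * x j)"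

definition Evec :: "nat \<Rightarrow> nat \<Rightarrow> nat \<Rightarrow> int" where
  "Evec i j = (\<lambda>k. (if k = i then 1 else 0) - (if k = j then 1 else 0))"

text \<open>The pair {v_i, v_j} has order h (paper's definition; indices 0-based, s_n is s (n-1)).\<close>
definition has_order :: "nat \<Rightarrow> (nat \<Rightarrow> nat \<Rightarrow> int) \<Rightarrow> nat \<Rightarrow> nat \<Rightarrow> nat \<Rightarrow> bool" where
  "has_order n A i j h \<longleftrightarrow> (\<exists>s :: nat \<Rightarrow> int.
     (\<forall>k<n. matvec n A s k = int h * Evec i j k) \<and>
     Gcd ((\<lambda>k. s k - s (n - 1)) ` {0..<n - 1}) = 1)"

definition in_image :: "nat \<Rightarrow> (nat \<Rightarrow> nat \<Rightarrow> int) \<Rightarrow> (nat \<Rightarrow> int) \<Rightarrow> bool" where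
  "in_image n A y \<longleftrightarrow> (\<exists>x :: nat \<Rightarrow> int. \<forall>k<n. matvec n A x k = y k)"

definition spread :: "nat \<Rightarrow> (nat \<Rightarrow> nat \<Rightarrow> int) \<Rightarrow> bool" where
  "spread n A \<longleftrightarrow> (\<forall>i<n. \<forall>j<n. i \<noteq> j \<longrightarrow> \<not> in_image n A (Evec i j))"

definition laplacian :: "'e set \<Rightarrow> ('e \<Rightarrow> nat \<times> nat) \<Rightarrow> nat \<Rightarrow> nat \<Rightarrow> nat \<Rightarrow> int" where
  "laplacian E ep n i j = - Mmat E ep n i j"

end

theory Submission
  imports Defs
begin

text \<open>Write (M s)_k as a sum over the edges at k of the differences of s along them. Summing
  over a vertex set U, the edges inside U cancel, leaving the flow of s across the boundary of U.

  Suppose M s = E_ij and s q < s p along an edge pq. On the upper level set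
  U = {k. s p \<le> s k} every edge leaving U contributes at most -1 to the flow, while the
  total flow is [i \<in> U] - [j \<in> U] \<ge> -1; so pq is the only edge leaving U and it is a bridge.
  Applied to the component of i in the graph of edges along which s is nonconstant, the
  total flow is 0, so that component contains j: i and j are joined by a path of bridges.
  Conversely, a bridge uv gives E_uv = M s for s the indicator of the side of v, and these
  vectors telescope along a path. For h = 1 the gcd condition in the definition of the order
  is automatic, since the gcd of the differences of s divides every entry of M s.\<close>

definition edge_flow :: "('e \<Rightarrow> nat \<times> nat) \<Rightarrow> (nat \<Rightarrow> int) \<Rightarrow> 'e \<Rightarrow> nat \<Rightarrow> int" where
  "edge_flow ep s e k =
     (if fst (ep e) = k then s (snd (ep e)) - s (fst (ep e)) else 0) +
     (if snd (ep e) = k then s (fst (ep e)) - s (snd (ep e)) else 0)"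

definition boundary_flow :: "('e \<Rightarrow> nat \<times> nat) \<Rightarrow> (nat \<Rightarrow> int) \<Rightarrow> nat set \<Rightarrow> 'e \<Rightarrow> int" where
  "boundary_flow ep s U e =
     (if fst (ep e) \<in> U then s (snd (ep e)) - s (fst (ep e)) else 0) +
     (if snd (ep e) \<in> U then s (fst (ep e)) - s (snd (ep e)) else 0)"

lemma sum_edge_flow: "finite U \<Longrightarrow> (\<Sum>k\<in>U. edge_flow ep s e k) = boundary_flow ep s U e"
  unfolding edge_flow_def boundary_flow_def by (simp add: sum.distrib)

lemma wf_multigraph_edge:
  "wf_multigraph n E ep \<Longrightarrow> e \<in> E \<Longrightarrow> fst (ep e) < n \<and> snd (ep e) < n \<and> fst (ep e) \<noteq> snd (ep e)"
  unfolding wf_multigraph_def by auto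

lemma matvec_Mmat:
  assumes wf: "wf_multigraph n E ep" and k: "k < n"
  shows "matvec n (Mmat E ep n) s k = (\<Sum>e\<in>E. edge_flow ep s e k)"
proof -
  let ?A = "\<lambda>l. {e\<in>E. joins ep e k l}"
  let ?T = "{0..<n} - {k}"
  define S where "S = {e\<in>E. fst (ep e) = k \<or> snd (ep e) = k}"
  define other_end where "other_end e = (if fst (ep e) = k then snd (ep e) else fst (ep e))" for e
  have fin: "finite E" using wf unfolding wf_multigraph_def by auto
  have "matvec n (Mmat E ep n) s k = Mmat E ep n k k * s k + (\<Sum>l\<in>?T. Mmat E ep n k l * s l)"
    unfolding matvec_def using k
    by (simp add: atLeast0LessThan[symmetric] sum.remove[of "{0..<n}" k])
  also have "\<dots> = (\<Sum>l\<in>?T. int (card (?A l)) * (s l - s k))"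
    by (simp add: Mmat_def sum_distrib_right right_diff_distrib sum_subtractf)
  also have "\<dots> = (\<Sum>l\<in>?T. \<Sum>e\<in>{e \<in> S. other_end e = l}. edge_flow ep s e k)"
  proof (rule sum.cong[OF refl])
    fix l assume l: "l \<in> ?T"
    have "?A l = {e \<in> S. other_end e = l}"
      using l by (auto simp: S_def other_end_def joins_def prod_eq_iff)
    moreover have "edge_flow ep s e k = s l - s k" if "e \<in> ?A l" for e
      using that l by (cases "ep e") (auto simp: edge_flow_def joins_def)
    ultimately show "int (card (?A l)) * (s l - s k) =
        (\<Sum>e\<in>{e \<in> S. other_end e = l}. edge_flow ep s e k)"
      by simp
  qed
  also have "\<dots> = (\<Sum>e\<in>S. edge_flow ep s e k)"
  proof (rule sum.group)
    show "finite S" using fin by (simp add: S_def)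
    show "other_end ` S \<subseteq> ?T" using wf unfolding S_def other_end_def wf_multigraph_def by force
  qed simp
  also have "\<dots> = (\<Sum>e\<in>E. edge_flow ep s e k)"
    by (rule sum.mono_neutral_left) (auto simp: fin S_def edge_flow_def)
  finally show ?thesis .
qed

lemma sum_matvec_Mmat:
  assumes wf: "wf_multigraph n E ep" and U: "U \<subseteq> {0..<n}"
  shows "(\<Sum>k\<in>U. matvec n (Mmat E ep n) s k) = (\<Sum>e\<in>E. boundary_flow ep s U e)"
proof -
  have fU: "finite U" using U finite_subset by blast
  have "(\<Sum>k\<in>U. matvec n (Mmat E ep n) s k) = (\<Sum>k\<in>U. \<Sum>e\<in>E. edge_flow ep s e k)"
    using U matvec_Mmat[OF wf] by (intro sum.cong) auto
  also have "\<dots> = (\<Sum>e\<in>E. \<Sum>k\<in>U. edge_flow ep s e k)" by (rule sum.swap)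
  finally show ?thesis by (simp add: sum_edge_flow[OF fU])
qed

lemma sum_Evec:
  "finite U \<Longrightarrow> (\<Sum>k\<in>U. Evec i j k) = (if i \<in> U then 1 else 0) - (if j \<in> U then 1 else 0)"
  unfolding Evec_def by (simp add: sum_subtractf)

lemma sum_boundary_flow_of_solution:
  assumes wf: "wf_multigraph n E ep" and s: "\<forall>k<n. matvec n (Mmat E ep n) s k = Evec i j k"
    and U: "U \<subseteq> {0..<n}"
  shows "(\<Sum>e\<in>E. boundary_flow ep s U e) = (if i \<in> U then 1 else 0) - (if j \<in> U then 1 else 0)"
proof -
  have "(\<Sum>e\<in>E. boundary_flow ep s U e) = (\<Sum>k\<in>U. Evec i j k)"
    using U s by (simp add: sum_matvec_Mmat[OF wf U, symmetric] subset_eq)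
  then show ?thesis using U finite_subset sum_Evec by (metis finite_atLeastLessThan)
qed

lemma dvd_matvec_Mmat:
  assumes wf: "wf_multigraph n E ep" and k: "k < n"
    and dvd: "\<And>a b. a < n \<Longrightarrow> b < n \<Longrightarrow> d dvd s a - s b"
  shows "d dvd matvec n (Mmat E ep n) s k"
proof -
  have "d dvd edge_flow ep s e k" if "e \<in> E" for e
    using wf_multigraph_edge[OF wf that] dvd unfolding edge_flow_def by (intro dvd_add) auto
  then show ?thesis unfolding matvec_Mmat[OF wf k] by (intro dvd_sum)
qed

definition is_walk :: "'e set \<Rightarrow> ('e \<Rightarrow> nat \<times> nat) \<Rightarrow> nat \<Rightarrow> nat \<Rightarrow> 'e list \<Rightarrow> nat list \<Rightarrow> bool" where
  "is_walk F ep i j es vs \<longleftrightarrow> set es \<subseteq> F \<and>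
     length vs = Suc (length es) \<and> vs ! 0 = i \<and> vs ! length es = j \<and>
     (\<forall>k<length es. joins ep (es ! k) (vs ! k) (vs ! Suc k))"

lemma is_path_iff_is_walk: "is_path F ep i j es vs \<longleftrightarrow> is_walk F ep i j es vs \<and> distinct es"
  unfolding is_path_def is_walk_def by auto

lemma is_walk_take:
  assumes "is_walk F ep i j es vs" "p < length vs"
  shows "is_walk F ep i (vs ! p) (take p es) (take (Suc p) vs)"
  using assms unfolding is_walk_def by (auto dest: in_set_takeD)

lemma is_walk_snoc:
  assumes "is_walk F ep i j es vs" "e \<in> F" "joins ep e j z"
  shows "is_walk F ep i z (es @ [e]) (vs @ [z])"
  using assms unfolding is_walk_def by (auto simp: nth_append less_Suc_eq)

lemma rtrancl_adj_rel_imp_walk: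
  assumes "(i, j) \<in> (adj_rel F ep)\<^sup>*"
  shows "\<exists>es vs. is_walk F ep i j es vs \<and> distinct vs"
  using assms
proof (induction rule: rtrancl_induct)
  case base
  have "is_walk F ep i i [] [i]" by (simp add: is_walk_def)
  then show ?case by fastforce
next
  case (step y z)
  then obtain es vs where walk: "is_walk F ep i y es vs" and "distinct vs" by blast
  from step(2) obtain e where e: "e \<in> F" "joins ep e y z" unfolding adj_rel_def by blast
  show ?case
  proof (cases "z \<in> set vs")
    case True
    then obtain p where "p < length vs" "vs ! p = z" by (metis in_set_conv_nth)
    then show ?thesis using is_walk_take[OF walk] \<open>distinct vs\<close> by (metis distinct_take)
  next
    case False
    then show ?thesis using is_walk_snoc[OF walk e] \<open>distinct vs\<close> by fastforce
  qed
qed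

lemma distinct_edges_if_distinct_vertices:
  assumes walk: "is_walk F ep i j es vs" and "distinct vs"
  shows "distinct es"
proof -
  have "es ! p \<noteq> es ! q" if pq: "p < q" "q < length es" for p q
  proof
    assume "es ! p = es ! q"
    moreover have "joins ep (es ! p) (vs ! p) (vs ! Suc p)" "joins ep (es ! q) (vs ! q) (vs ! Suc q)"
      using walk pq unfolding is_walk_def by auto
    ultimately have "vs ! p = vs ! q \<or> vs ! p = vs ! Suc q" unfolding joins_def by auto
    then show False using walk \<open>distinct vs\<close> pq by (auto simp: is_walk_def nth_eq_iff_index_eq)
  qed
  then show ?thesis by (metis distinct_conv_nth linorder_neqE_nat)
qed

lemma rtrancl_adj_rel_imp_path:
  "(i, j) \<in> (adj_rel F ep)\<^sup>* \<Longrightarrow> \<exists>es vs. is_path F ep i j es vs"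
  using rtrancl_adj_rel_imp_walk distinct_edges_if_distinct_vertices is_path_iff_is_walk by metis

lemma is_path_mono: "is_path F ep i j es vs \<Longrightarrow> F \<subseteq> E \<Longrightarrow> is_path E ep i j es vs"
  unfolding is_path_def by auto

lemma sym_adj_rel: "sym (adj_rel F ep)"
  unfolding adj_rel_def joins_def sym_def by auto

lemma adj_rel_edge: "e \<in> F \<Longrightarrow> (fst (ep e), snd (ep e)) \<in> adj_rel F ep"
  unfolding adj_rel_def joins_def by auto

lemma rtrancl_adj_rel_closed_set:
  assumes "(a, b) \<in> (adj_rel F ep)\<^sup>*"
    and closed: "\<And>e. e \<in> F \<Longrightarrow> fst (ep e) \<in> U \<longleftrightarrow> snd (ep e) \<in> U"
    and "a \<in> U"
  shows "b \<in> U"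
  using assms(1,3)
proof (induction rule: rtrancl_induct)
  case (step y z)
  then obtain e where "e \<in> F" "ep e = (y, z) \<or> ep e = (z, y)"
    unfolding adj_rel_def joins_def by blast
  then show ?case using closed step.IH step.prems by fastforce
qed

lemma component_closed:
  assumes "e \<in> F"
  shows "fst (ep e) \<in> (adj_rel F ep)\<^sup>* `` {u} \<longleftrightarrow> snd (ep e) \<in> (adj_rel F ep)\<^sup>* `` {u}"
  using adj_rel_edge[OF assms] symD[OF sym_adj_rel, OF adj_rel_edge[OF assms]]
  by (auto intro: rtrancl_into_rtrancl)

lemma bridge_separates_ends:
  assumes conn: "mg_connected n E ep" and nc: "\<not> mg_connected n (E - {e}) ep"
    and e: "joins ep e u v"
  shows "(u, v) \<notin> (adj_rel (E - {e}) ep)\<^sup>*"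
proof
  let ?R = "adj_rel (E - {e}) ep"
  assume uv: "(u, v) \<in> ?R\<^sup>*"
  then have vu: "(v, u) \<in> ?R\<^sup>*" by (rule symD[OF sym_rtrancl[OF sym_adj_rel]])
  have "adj_rel E ep \<subseteq> ?R\<^sup>*"
  proof
    fix p assume "p \<in> adj_rel E ep"
    then obtain a b e' where "p = (a, b)" "e' \<in> E" "joins ep e' a b" unfolding adj_rel_def by blast
    then show "p \<in> ?R\<^sup>*" using e uv vu unfolding adj_rel_def joins_def by (cases "e' = e") auto
  qed
  then have "(adj_rel E ep)\<^sup>* \<subseteq> ?R\<^sup>*" by (rule rtrancl_subset_rtrancl)
  then show False using conn nc unfolding mg_connected_def by blast
qed

lemma matvec_add: "matvec n A (\<lambda>k. x k + y k) k = matvec n A x k + matvec n A y k"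
  unfolding matvec_def by (simp add: distrib_left sum.distrib)

lemma in_image_zero: "in_image n A (\<lambda>k. 0)"
  unfolding in_image_def matvec_def by (intro exI[of _ "\<lambda>k. 0"]) simp

lemma in_image_add: "in_image n A y \<Longrightarrow> in_image n A z \<Longrightarrow> in_image n A (\<lambda>k. y k + z k)"
  unfolding in_image_def using matvec_add by metis

lemma matvec_uminus: "matvec n (\<lambda>i j. - A i j) x = matvec n A (\<lambda>j. - x j)"
  unfolding matvec_def by simp

lemma in_image_uminus: "in_image n (\<lambda>i j. - A i j) y \<longleftrightarrow> in_image n A y"
proof
  assume "in_image n (\<lambda>i j. - A i j) y"
  then obtain x where "\<forall>k<n. matvec n A (\<lambda>j. - x j) k = y k"
    unfolding in_image_def matvec_uminus by blast
  then show "in_image n A y" unfolding in_image_def by blast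
next
  assume "in_image n A y"
  then obtain x where "\<forall>k<n. matvec n A x k = y k" unfolding in_image_def by blast
  then show "in_image n (\<lambda>i j. - A i j) y"
    unfolding in_image_def matvec_uminus by (intro exI[of _ "\<lambda>j. - x j"]) simp
qed

lemma in_image_laplacian: "in_image n (laplacian E ep n) y \<longleftrightarrow> in_image n (Mmat E ep n) y"
proof -
  have "laplacian E ep n = (\<lambda>i j. - Mmat E ep n i j)" by (simp add: fun_eq_iff laplacian_def)
  then show ?thesis by (simp add: in_image_uminus)
qed

lemma bridge_Evec_in_image:
  assumes wf: "wf_multigraph n E ep" and conn: "mg_connected n E ep"
    and e: "e \<in> E" "joins ep e u v" and nc: "\<not> mg_connected n (E - {e}) ep"
  shows "in_image n (Mmat E ep n) (Evec u v)"
proof -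
  define C where "C = (adj_rel (E - {e}) ep)\<^sup>* `` {u}"
  define s where "s k = (if k \<in> C then 0 else 1 :: int)" for k
  have "u \<in> C" "v \<notin> C" using bridge_separates_ends[OF conn nc e(2)] by (auto simp: C_def)
  moreover have "u \<noteq> v" using wf_multigraph_edge[OF wf e(1)] e(2) unfolding joins_def by auto
  moreover have "ep e = (u, v) \<or> ep e = (v, u)" using e(2) unfolding joins_def .
  ultimately have flow_e: "edge_flow ep s e k = Evec u v k" for k
    by (elim disjE) (auto simp: edge_flow_def Evec_def s_def)
  have "edge_flow ep s e' k = 0" if "e' \<in> E - {e}" for e' k
    using component_closed[OF that, where u = u] unfolding edge_flow_def s_def C_def by auto
  moreover have "finite E" using wf unfolding wf_multigraph_def by auto
  ultimately have "(\<Sum>e'\<in>E. edge_flow ep s e' k) = Evec u v k" for k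
    using e(1) flow_e by (simp add: sum.remove)
  then show ?thesis unfolding in_image_def using matvec_Mmat[OF wf] by metis
qed

lemma solution_nonconstant_edge_is_bridge:
  assumes wf: "wf_multigraph n E ep" and s: "\<forall>k<n. matvec n (Mmat E ep n) s k = Evec i j k"
    and e0: "e0 \<in> E" "joins ep e0 p q" and lt: "s q < s p"
  shows "\<not> mg_connected n (E - {e0}) ep"
proof
  assume conn: "mg_connected n (E - {e0}) ep"
  define U where "U = {k. k < n \<and> s p \<le> s k}"
  define leaves where "leaves e \<longleftrightarrow> (fst (ep e) \<in> U) \<noteq> (snd (ep e) \<in> U)" for e
  have fin: "finite E" using wf unfolding wf_multigraph_def by auto
  have pq: "p < n" "q < n" "p \<in> U" "q \<notin> U"
    using wf_multigraph_edge[OF wf e0(1)] e0(2) lt unfolding joins_def U_def by auto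
  have flow_le: "boundary_flow ep s U e \<le> (if leaves e then -1 else 0)" if "e \<in> E" for e
    using wf_multigraph_edge[OF wf that] unfolding boundary_flow_def leaves_def U_def by auto
  have "leaves e0" using e0(2) pq unfolding joins_def leaves_def by auto
  have no_other_leaves: "\<not> leaves e" if e: "e \<in> E - {e0}" for e
  proof
    assume "leaves e"
    have "U \<subseteq> {0..<n}" by (auto simp: U_def)
    from sum_boundary_flow_of_solution[OF wf s this]
    have "-1 \<le> (\<Sum>e\<in>E. boundary_flow ep s U e)" by simp
    also have "\<dots> = boundary_flow ep s U e0 + boundary_flow ep s U e
                      + (\<Sum>e\<in>E - {e0} - {e}. boundary_flow ep s U e)"
      using fin e e0(1) by (simp add: sum.remove)
    also have "\<dots> \<le> -1 + -1 + 0"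
      using flow_le e e0(1) \<open>leaves e\<close> \<open>leaves e0\<close>
      by (intro add_mono sum_nonpos) (fastforce split: if_splits)+
    finally show False by simp
  qed
  have "(p, q) \<in> (adj_rel (E - {e0}) ep)\<^sup>*" using conn pq unfolding mg_connected_def by blast
  moreover have "fst (ep e) \<in> U \<longleftrightarrow> snd (ep e) \<in> U" if "e \<in> E - {e0}" for e
    using no_other_leaves[OF that] by (simp add: leaves_def)
  ultimately have "q \<in> U" using \<open>p \<in> U\<close> by (rule rtrancl_adj_rel_closed_set)
  then show False using \<open>q \<notin> U\<close> by contradiction
qed

lemma Evec_in_image_imp_bridge_path:
  assumes wf: "wf_multigraph n E ep" and ij: "i < n" "j < n"
    and im: "in_image n (Mmat E ep n) (Evec i j)"
  shows "\<exists>es vs. is_path E ep i j es vs \<and> (\<forall>e\<in>set es. \<not> mg_connected n (E - {e}) ep)"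
proof -
  obtain s where s: "\<forall>k<n. matvec n (Mmat E ep n) s k = Evec i j k"
    using im unfolding in_image_def by blast
  define F where "F = {e\<in>E. s (fst (ep e)) \<noteq> s (snd (ep e))}"
  have bridge: "\<not> mg_connected n (E - {e}) ep" if "e \<in> F" for e
  proof -
    have "s (snd (ep e)) < s (fst (ep e)) \<or> s (fst (ep e)) < s (snd (ep e))"
      using that by (auto simp: F_def)
    then obtain p q where "joins ep e p q" "s q < s p"
      unfolding joins_def by (elim disjE) (metis prod.collapse)+
    then show ?thesis using that solution_nonconstant_edge_is_bridge[OF wf s] by (simp add: F_def)
  qed
  define R where "R = (adj_rel F ep)\<^sup>* `` {i} \<inter> {0..<n}"
  have "boundary_flow ep s R e = 0" if "e \<in> E" for e
  proof (cases "e \<in> F")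
    case True
    then have "fst (ep e) \<in> R \<longleftrightarrow> snd (ep e) \<in> R"
      using component_closed[OF True, where u = i] wf_multigraph_edge[OF wf that] by (simp add: R_def)
    then show ?thesis unfolding boundary_flow_def by auto
  next
    case False
    then show ?thesis using that unfolding boundary_flow_def F_def by auto
  qed
  then have "(if i \<in> R then 1 else 0) - (if j \<in> R then 1 else (0::int)) = 0"
    using sum_boundary_flow_of_solution[OF wf s, of R] by (simp add: R_def)
  moreover have "i \<in> R" using ij by (simp add: R_def)
  ultimately have "(i, j) \<in> (adj_rel F ep)\<^sup>*" by (auto simp: R_def split: if_splits)
  then obtain es vs where "is_path F ep i j es vs" using rtrancl_adj_rel_imp_path by blast
  moreover have "F \<subseteq> E" by (auto simp: F_def)
  ultimately show ?thesis using is_path_mono bridge unfolding is_path_def by blast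
qed

lemma bridge_path_imp_Evec_in_image:
  assumes wf: "wf_multigraph n E ep" and conn: "mg_connected n E ep"
    and path: "is_path E ep i j es vs" and bridges: "\<forall>e\<in>set es. \<not> mg_connected n (E - {e}) ep"
  shows "in_image n (Mmat E ep n) (Evec i j)"
proof -
  have "in_image n (Mmat E ep n) (Evec i (vs ! m))" if "m \<le> length es" for m
    using that
  proof (induction m)
    case 0
    have "Evec i (vs ! 0) = (\<lambda>k. 0)" using path unfolding is_path_def Evec_def by auto
    then show ?case using in_image_zero by simp
  next
    case (Suc m)
    then have "m < length es" by simp
    then have "es ! m \<in> E" "joins ep (es ! m) (vs ! m) (vs ! Suc m)" "es ! m \<in> set es"
      using path unfolding is_path_def by auto
    then have "in_image n (Mmat E ep n) (Evec (vs ! m) (vs ! Suc m))"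
      using bridge_Evec_in_image[OF wf conn] bridges by blast
    from in_image_add[OF Suc.IH[OF Suc_leD[OF Suc.prems]] this]
    show ?case unfolding Evec_def by (simp add: algebra_simps)
  qed
  then show ?thesis using path unfolding is_path_def by auto
qed

lemma Evec_in_image_iff_bridge_path:
  assumes wf: "wf_multigraph n E ep" and conn: "mg_connected n E ep" and ij: "i < n" "j < n"
  shows "in_image n (Mmat E ep n) (Evec i j) \<longleftrightarrow>
           (\<exists>es vs. is_path E ep i j es vs \<and> (\<forall>e\<in>set es. \<not> mg_connected n (E - {e}) ep))"
  using Evec_in_image_imp_bridge_path[OF wf ij] bridge_path_imp_Evec_in_image[OF wf conn] by blast

lemma has_order_1_iff_in_image:
  assumes wf: "wf_multigraph n E ep" and i: "i < n" and ij: "i \<noteq> j"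
  shows "has_order n (Mmat E ep n) i j 1 \<longleftrightarrow> in_image n (Mmat E ep n) (Evec i j)"
proof
  assume "in_image n (Mmat E ep n) (Evec i j)"
  then obtain s where s: "\<forall>k<n. matvec n (Mmat E ep n) s k = Evec i j k"
    unfolding in_image_def by blast
  define g where "g = Gcd ((\<lambda>k. s k - s (n - 1)) ` {0..<n - 1})"
  have g_dvd: "g dvd s k - s (n - 1)" if "k < n" for k
  proof (cases "k < n - 1")
    case False
    then have "k = n - 1" using that by simp
    then show ?thesis by simp
  qed (auto simp: g_def intro: Gcd_dvd)
  have "g dvd s a - s b" if "a < n" "b < n" for a b
    using dvd_diff[OF g_dvd[OF that(1)] g_dvd[OF that(2)]] by simp
  then have "g dvd matvec n (Mmat E ep n) s i" by (rule dvd_matvec_Mmat[OF wf i])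
  then have "g dvd 1" using s i ij by (simp add: Evec_def)
  then have "normalize g = 1" by (simp add: is_unit_normalize)
  then have "g = 1" by (simp add: g_def)
  then show "has_order n (Mmat E ep n) i j 1" unfolding has_order_def g_def using s by auto
qed (auto simp: has_order_def in_image_def)

lemma multiply_connected_iff_no_Evec_in_image:
  assumes wf: "wf_multigraph n E ep" and conn: "mg_connected n E ep"
  shows "multiply_connected n E ep \<longleftrightarrow>
           (\<forall>i<n. \<forall>j<n. i \<noteq> j \<longrightarrow> \<not> in_image n (Mmat E ep n) (Evec i j))"
proof safe
  fix i j assume "multiply_connected n E ep" "i < n" "j < n" "i \<noteq> j"
    and "in_image n (Mmat E ep n) (Evec i j)"
  then obtain es vs where path: "is_path E ep i j es vs"
      and bridges: "\<forall>e\<in>set es. \<not> mg_connected n (E - {e}) ep"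
    using Evec_in_image_imp_bridge_path[OF wf] by blast
  have "es \<noteq> []" using path \<open>i \<noteq> j\<close> unfolding is_path_def by auto
  then have "hd es \<in> set es" "hd es \<in> E" using path unfolding is_path_def by auto
  then show False using bridges \<open>multiply_connected n E ep\<close>
    unfolding multiply_connected_def by blast
next
  assume no_image: "\<forall>i<n. \<forall>j<n. i \<noteq> j \<longrightarrow> \<not> in_image n (Mmat E ep n) (Evec i j)"
  show "multiply_connected n E ep" unfolding multiply_connected_def
  proof (rule ballI, rule ccontr)
    fix e assume e: "e \<in> E" and bridge: "\<not> mg_connected n (E - {e}) ep"
    have "joins ep e (fst (ep e)) (snd (ep e))" by (simp add: joins_def)
    from bridge_Evec_in_image[OF wf conn e this bridge]
    show False using no_image wf_multigraph_edge[OF wf e] by blast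
  qed
qed

theorem corollary2p3:
  fixes n :: nat and E :: "'e set" and ep :: "'e \<Rightarrow> nat \<times> nat"
  assumes "wf_multigraph n E ep"
    and "mg_connected n E ep"
  shows "(\<forall>i<n. \<forall>j<n. i \<noteq> j \<longrightarrow>
            (has_order n (Mmat E ep n) i j 1 \<longleftrightarrow>
             (\<exists>es vs. is_path E ep i j es vs \<and>
                (\<forall>e\<in>set es. \<not> mg_connected n (E - {e}) ep))))
       \<and> (multiply_connected n E ep \<longleftrightarrow> spread n (laplacian E ep n))"
proof (intro conjI allI impI)
  fix i j assume ij: "i < n" "j < n" "i \<noteq> j"
  show "has_order n (Mmat E ep n) i j 1 \<longleftrightarrow>
      (\<exists>es vs. is_path E ep i j es vs \<and> (\<forall>e\<in>set es. \<not> mg_connected n (E - {e}) ep))"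
    unfolding has_order_1_iff_in_image[OF assms(1) ij(1,3)]
    by (rule Evec_in_image_iff_bridge_path[OF assms ij(1,2)])
next
  show "multiply_connected n E ep \<longleftrightarrow> spread n (laplacian E ep n)"
    unfolding spread_def in_image_laplacian multiply_connected_iff_no_Evec_in_image[OF assms] ..
qed

end
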